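(* Let $c\in\mathcal M$ and let $a,b\in\mathbb R$ with $b\neq 0$. A tangent vector $h\in T_c\mathcal M$ is horizontal for the elastic metric $G^{a,b}$ (i.e. $G^{a,b}_c(h,mv)=0$ for all $m\in\mathcal C$) if and only if, for all $t\in[0,1]$, $$\big((a/b)^2-1\big)\langle \nabla_th,\nabla_tv\rangle-\langle\nabla_t^2h,v\rangle+|c'|^{-1}\langle\nabla_tc',v\rangle\langle\nabla_th,v\rangle=0 .$$ In particular, for $a=1,\ b=\tfrac12$ (the metric $G=G^{1,1/2}$), $h$ is horizontal iff $3\langle \nabla_th,\nabla_tv\rangle-\langle\nabla_t^2h,v\rangle+|c'|^{-1}\langle\nabla_tc',v\rangle\langle\nabla_th,v\rangle=0$ for all $t$. Moreover, for $G$ and any $w\in T_c\mathcal M$, a function $m\in\mathcal C$ is such that $w-mv$ is horizontal (so that $w=mv+(w-mv)$ is the decomposition of $w$ into a vertical part $mv$ and a horizontal part) if and only if $m$ satisfies $$m''-\langle \nabla_tc'/|c'|,v\rangle m'-4|\nabla_tv|^2m=\langle\nabla_t^2w,v\rangle-3\langle\nabla_tw,\nabla_tv\rangle-\langle\nabla_tc'/|c'|,v\rangle\langle\nabla_tw,v\rangle \quad\text{on }[0,1].$$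
   Context: $(M,\langle\cdot,\cdot\rangle)$ is a Riemannian manifold with norm $|\cdot|$ and Levi-Civita connection $\nabla$. $\mathcal M$ is the set of smooth immersions $c:[0,1]\to M$ ($c'(t)\neq0$ for all $t$); $T_c\mathcal M$ is the space of smooth vector fields $w$ along $c$. For a vector field $w$ along $c$, $\nabla_tw$ denotes the covariant derivative along $c$, $v:=c'/|c'|$, $w^T:=\langle w,v\rangle v$, $w^N:=w-w^T$. Arc-length derivative and measure: $\nabla_\ell:=|c'|^{-1}\nabla_t$, $\mathrm d\ell:=|c'(t)|\mathrm dt$. The elastic metric with parameters $a,b$ is $$G^{a,b}_c(w,w)=|w(0)|^2+\int_0^1 a^2\Big(|(\nabla_\ell w)^N|^2+b^2|(\nabla_\ell w)^T|^2\Big)\mathrm d\ell,$$ and $G:=G^{1,1/2}$. $\mathcal C:=\{m\in C^\infty([0,1],\mathbb R): m(0)=m(1)=0\}$; the vertical space at $c$ is $\{mv: m\in\mathcal C\}$ and the horizontal space is its $G^{a,b}$-orthogonal complement in $T_c\mathcal M$. *)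

theory Defs
  imports "HOL-Analysis.Analysis"
begin

text \<open>Vector fields along the curve c are represented in a parallel orthonormal frame
along c: a vector field along c is a map [0,1] -> E (E a Euclidean space modelling the
tangent space), the covariant derivative along c becomes the ordinary derivative, and
the Riemannian inner product becomes the inner product of E.  The curve c enters only
through its velocity field c', represented by u.\<close>

definition I01 :: "real set" where "I01 = {0..1}"

definition nablat :: "(real \<Rightarrow> 'a::real_normed_vector) \<Rightarrow> real \<Rightarrow> 'a" where
  "nablat w t = vector_derivative w (at t within I01)"

definition smooth01 :: "(real \<Rightarrow> 'a::real_normed_vector) \<Rightarrow> bool" where
  "smooth01 f \<longleftrightarrow> (\<exists>D :: nat \<Rightarrow> real \<Rightarrow> 'a. (\<forall>t\<in>I01. D 0 t = f t) \<and>
      (\<forall>k. \<forall>t\<in>I01. (D k has_vector_derivative D (Suc k) t) (at t within I01)))"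

definition immersion :: "(real \<Rightarrow> 'a::euclidean_space) \<Rightarrow> bool" where
  "immersion u \<longleftrightarrow> smooth01 u \<and> (\<forall>t\<in>I01. u t \<noteq> 0)"

definition unitv :: "(real \<Rightarrow> 'a::euclidean_space) \<Rightarrow> real \<Rightarrow> 'a" where
  "unitv u t = (1 / norm (u t)) *\<^sub>R u t"

definition tpart :: "(real \<Rightarrow> 'a::euclidean_space) \<Rightarrow> real \<Rightarrow> 'a \<Rightarrow> 'a" where
  "tpart u t x = (x \<bullet> unitv u t) *\<^sub>R unitv u t"

definition npart :: "(real \<Rightarrow> 'a::euclidean_space) \<Rightarrow> real \<Rightarrow> 'a \<Rightarrow> 'a" where
  "npart u t x = x - tpart u t x"

definition nablal :: "(real \<Rightarrow> 'a::euclidean_space) \<Rightarrow> (real \<Rightarrow> 'a) \<Rightarrow> real \<Rightarrow> 'a" where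
  "nablal u w t = (1 / norm (u t)) *\<^sub>R nablat w t"

definition Gq :: "real \<Rightarrow> real \<Rightarrow> (real \<Rightarrow> 'a::euclidean_space) \<Rightarrow> (real \<Rightarrow> 'a) \<Rightarrow> real" where
  "Gq a b u w = (norm (w 0))\<^sup>2 +
     integral I01 (\<lambda>t. (a\<^sup>2 * (norm (npart u t (nablal u w t)))\<^sup>2
                       + b\<^sup>2 * (norm (tpart u t (nablal u w t)))\<^sup>2) * norm (u t))"

definition Gbil :: "real \<Rightarrow> real \<Rightarrow> (real \<Rightarrow> 'a::euclidean_space) \<Rightarrow> (real \<Rightarrow> 'a) \<Rightarrow> (real \<Rightarrow> 'a) \<Rightarrow> real" where
  "Gbil a b u w1 w2 = (Gq a b u (\<lambda>t. w1 t + w2 t) - Gq a b u (\<lambda>t. w1 t - w2 t)) / 4"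

definition Cfun :: "(real \<Rightarrow> real) set" where
  "Cfun = {m. smooth01 m \<and> m 0 = 0 \<and> m 1 = 0}"

definition horizontal :: "real \<Rightarrow> real \<Rightarrow> (real \<Rightarrow> 'a::euclidean_space) \<Rightarrow> (real \<Rightarrow> 'a) \<Rightarrow> bool" where
  "horizontal a b u h \<longleftrightarrow> (\<forall>m\<in>Cfun. Gbil a b u h (\<lambda>t. m t *\<^sub>R unitv u t) = 0)"

end

theory Submission
  imports Defs
begin

text \<open>Pairing h with a vertical vector m v and integrating the tangential term by parts gives
  G(h, m v) = \<integral> m F dt with F = a^2 \<langle>h', v'\<rangle>/|c'| - b^2 (\<langle>h', v\<rangle>/|c'|)': since
  \<langle>v, v'\<rangle> = 0, the arc-length derivative of m v splits into the tangential part m' v/|c'| and the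
  normal part m v'/|c'|, and the boundary term vanishes because m(0) = m(1) = 0. By the
  fundamental lemma of the calculus of variations h is horizontal iff F = 0, and expanding the
  derivative shows F = b^2/|c'| times the expression of the theorem. The equation for m follows
  by substituting h = w - m v and using |v| = 1, \<langle>v, v'\<rangle> = 0 and \<langle>v, v''\<rangle> = -|v'|^2.\<close>

section \<open>Derivatives on [0,1]\<close>

lemma trivial_limit_at_I01: "t \<in> I01 \<Longrightarrow> at t within I01 \<noteq> bot"
  unfolding I01_def using trivial_limit_within[of t "{0..1::real}"] by simp

lemma nablat_eqI:
  "(f has_vector_derivative f') (at t within I01) \<Longrightarrow> t \<in> I01 \<Longrightarrow> nablat f t = f'"
  unfolding nablat_def by (rule vector_derivative_within[OF trivial_limit_at_I01])

lemma nablat_cong: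
  assumes "t \<in> I01" and "\<And>s. s \<in> I01 \<Longrightarrow> f s = g s"
  shows "nablat f t = nablat g t"
  unfolding nablat_def by (rule vector_derivative_cong_eq) (auto simp: assms)

definition differentiable01 :: "(real \<Rightarrow> 'a::real_normed_vector) \<Rightarrow> bool" where
  "differentiable01 f \<longleftrightarrow> (\<forall>t\<in>I01. (f has_vector_derivative nablat f t) (at t within I01))"

fun times_differentiable01 :: "nat \<Rightarrow> (real \<Rightarrow> 'a::real_normed_vector) \<Rightarrow> bool" where
  "times_differentiable01 0 f = True"
| "times_differentiable01 (Suc k) f \<longleftrightarrow> differentiable01 f \<and> times_differentiable01 k (nablat f)"

lemma differentiable01_cong:
  assumes "differentiable01 f" and "\<And>s. s \<in> I01 \<Longrightarrow> f s = g s"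
  shows "differentiable01 g"
  using assms has_vector_derivative_transform nablat_cong unfolding differentiable01_def by metis

lemma times_differentiable01_cong:
  "times_differentiable01 k f \<Longrightarrow> (\<And>s. s \<in> I01 \<Longrightarrow> f s = g s) \<Longrightarrow> times_differentiable01 k g"
proof (induction k arbitrary: f g)
  case (Suc k)
  then show ?case using differentiable01_cong[of f g] nablat_cong[of _ f g] by auto
qed simp

lemma times_differentiable01_SucD:
  "times_differentiable01 (Suc k) f \<Longrightarrow> times_differentiable01 k f"
  by (induction k arbitrary: f) auto

lemma times_differentiable01_SucI:
  assumes "\<And>t. t \<in> I01 \<Longrightarrow> (f has_vector_derivative f' t) (at t within I01)"
    and "times_differentiable01 k f'"
  shows "times_differentiable01 (Suc k) f"
proof -
  have "nablat f t = f' t" if "t \<in> I01" for t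
    using assms(1)[OF that] that by (rule nablat_eqI)
  then show ?thesis
    using assms times_differentiable01_cong[of k f' "nablat f"] by (auto simp: differentiable01_def)
qed

lemma differentiable01_continuous_on: "differentiable01 f \<Longrightarrow> continuous_on I01 f"
  by (auto simp: differentiable01_def intro!: continuous_on_vector_derivative)

lemma times_differentiable01_const: "times_differentiable01 k (\<lambda>t. c)"
proof (induction k arbitrary: c)
  case (Suc k)
  then show ?case
    by (intro times_differentiable01_SucI[where f'="\<lambda>t. 0"]) (auto intro: derivative_eq_intros)
qed simp

lemma times_differentiable01_ident: "times_differentiable01 k (\<lambda>t. t)"
proof (cases k)
  case (Suc j)
  show ?thesis unfolding Suc
    by (intro times_differentiable01_SucI[where f'="\<lambda>t. 1"] times_differentiable01_const)
      (auto intro!: derivative_eq_intros)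
qed simp

lemma times_differentiable01_add:
  "times_differentiable01 k f \<Longrightarrow> times_differentiable01 k g \<Longrightarrow>
    times_differentiable01 k (\<lambda>t. f t + g t)"
proof (induction k arbitrary: f g)
  case (Suc k)
  then show ?case
    by (intro times_differentiable01_SucI[where f'="\<lambda>t. nablat f t + nablat g t"])
      (auto simp: differentiable01_def intro!: derivative_eq_intros)
qed simp

lemma times_differentiable01_bilinear:
  fixes prod :: "'a::real_normed_vector \<Rightarrow> 'b::real_normed_vector \<Rightarrow> 'c::real_normed_vector"
  assumes "bounded_bilinear prod"
  shows "times_differentiable01 k f \<Longrightarrow> times_differentiable01 k g \<Longrightarrow>
    times_differentiable01 k (\<lambda>t. prod (f t) (g t))"
proof (induction k arbitrary: f g)
  case (Suc k)
  have "times_differentiable01 k (\<lambda>t. prod (f t) (nablat g t) + prod (nablat f t) (g t))"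
    using Suc by (intro times_differentiable01_add Suc.IH) (auto intro: times_differentiable01_SucD)
  then show ?case
    using Suc bounded_bilinear.has_vector_derivative[OF assms]
    by (intro times_differentiable01_SucI) (auto simp: differentiable01_def)
qed simp

lemmas times_differentiable01_scaleR = times_differentiable01_bilinear[OF bounded_bilinear_scaleR]
lemmas times_differentiable01_mult = times_differentiable01_bilinear[OF bounded_bilinear_mult]
lemmas times_differentiable01_inner = times_differentiable01_bilinear[OF bounded_bilinear_inner]

lemma times_differentiable01_diff:
  assumes "times_differentiable01 k f" and "times_differentiable01 k g"
  shows "times_differentiable01 k (\<lambda>t. f t - g t)"
proof -
  have "times_differentiable01 k (\<lambda>t. (-1::real) *\<^sub>R g t)"
    by (intro times_differentiable01_scaleR times_differentiable01_const assms(2))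
  then show ?thesis using times_differentiable01_add[OF assms(1)] by fastforce
qed

lemma times_differentiable01_inverse:
  "times_differentiable01 k f \<Longrightarrow> (\<And>t. t \<in> I01 \<Longrightarrow> f t \<noteq> (0::real)) \<Longrightarrow>
    times_differentiable01 k (\<lambda>t. inverse (f t))"
proof (induction k arbitrary: f)
  case (Suc k)
  have "times_differentiable01 k (\<lambda>t. - (nablat f t * (inverse (f t) * inverse (f t))))"
    using Suc times_differentiable01_SucD
    by (intro times_differentiable01_diff[of k "\<lambda>t. 0", simplified] times_differentiable01_const
        times_differentiable01_mult Suc.IH) auto
  then show ?case
    using Suc
    by (intro times_differentiable01_SucI)
      (auto simp: differentiable01_def has_real_derivative_iff_has_vector_derivative[symmetric]
        intro!: derivative_eq_intros)
qed simp

lemma has_vector_derivative_norm: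
  fixes u :: "real \<Rightarrow> 'a::real_inner"
  assumes "(u has_vector_derivative u') (at t within S)" and "u t \<noteq> 0"
  shows "((\<lambda>t. norm (u t)) has_vector_derivative (u t \<bullet> u') * inverse (norm (u t))) (at t within S)"
proof -
  have "((\<lambda>t. norm (u t)) has_derivative (\<lambda>y. sgn (u t) \<bullet> (y *\<^sub>R u'))) (at t within S)"
    using has_derivative_compose[OF assms(1)[unfolded has_vector_derivative_def]
        has_derivative_norm[OF assms(2)]]
    by (simp add: o_def inner_commute)
  moreover have "(\<lambda>y. sgn (u t) \<bullet> (y *\<^sub>R u')) = (\<lambda>y. y *\<^sub>R ((u t \<bullet> u') * inverse (norm (u t))))"
    by (auto simp: sgn_div_norm divide_inverse inner_commute)
  ultimately show ?thesis unfolding has_vector_derivative_def by simp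
qed

lemma times_differentiable01_norm:
  fixes u :: "real \<Rightarrow> 'a::real_inner"
  shows "times_differentiable01 k u \<Longrightarrow> (\<And>t. t \<in> I01 \<Longrightarrow> u t \<noteq> 0) \<Longrightarrow>
    times_differentiable01 k (\<lambda>t. norm (u t))"
proof (induction k arbitrary: u)
  case (Suc k)
  have "times_differentiable01 k (\<lambda>t. (u t \<bullet> nablat u t) * inverse (norm (u t)))"
    using Suc times_differentiable01_SucD
    by (intro times_differentiable01_mult times_differentiable01_inner
        times_differentiable01_inverse Suc.IH) auto
  then show ?case
    using Suc by (intro times_differentiable01_SucI)
      (auto simp: differentiable01_def intro!: has_vector_derivative_norm)
qed simp

lemma times_differentiable01_funpow_nablat:
  "times_differentiable01 (j + k) f \<Longrightarrow> times_differentiable01 k ((nablat ^^ j) f)"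
  by (induction j arbitrary: f) (auto simp del: funpow.simps simp: funpow_Suc_right)

lemma smooth01_iff_times_differentiable01: "smooth01 f \<longleftrightarrow> (\<forall>k. times_differentiable01 k f)"
proof
  assume "smooth01 f"
  then obtain D where D0: "\<forall>t\<in>I01. D 0 t = f t"
    and DS: "\<forall>k. \<forall>t\<in>I01. (D k has_vector_derivative D (Suc k) t) (at t within I01)"
    unfolding smooth01_def by blast
  have "times_differentiable01 k g" if "\<forall>t\<in>I01. g t = D j t" for k j g
    using that
  proof (induction k arbitrary: j g)
    case (Suc k)
    then have "(g has_vector_derivative D (Suc j) t) (at t within I01)" if "t \<in> I01" for t
      using has_vector_derivative_transform DS that by metis
    then show ?case by (rule times_differentiable01_SucI) (auto intro: Suc.IH)
  qed simp
  then show "\<forall>k. times_differentiable01 k f" using D0 by metis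
next
  assume "\<forall>k. times_differentiable01 k f"
  then have "times_differentiable01 (Suc 0) ((nablat ^^ k) f)" for k
    using times_differentiable01_funpow_nablat[of k "Suc 0" f] by simp
  then show "smooth01 f" unfolding smooth01_def
    by (intro exI[of _ "\<lambda>k. (nablat ^^ k) f"]) (simp add: differentiable01_def)
qed

lemma smooth01_times_differentiable01: "smooth01 f \<Longrightarrow> times_differentiable01 k f"
  by (simp add: smooth01_iff_times_differentiable01)

lemma smooth01_differentiable01: "smooth01 f \<Longrightarrow> differentiable01 f"
  using smooth01_times_differentiable01[of f 1] by simp

lemma smooth01_nablat: "smooth01 f \<Longrightarrow> smooth01 (nablat f)"
  by (metis smooth01_iff_times_differentiable01 times_differentiable01.simps(2))

lemma smooth01_continuous_on: "smooth01 f \<Longrightarrow> continuous_on I01 f"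
  by (intro differentiable01_continuous_on smooth01_differentiable01)

lemma smooth01_bilinear:
  fixes prod :: "'a::real_normed_vector \<Rightarrow> 'b::real_normed_vector \<Rightarrow> 'c::real_normed_vector"
  shows "bounded_bilinear prod \<Longrightarrow> smooth01 f \<Longrightarrow> smooth01 g \<Longrightarrow> smooth01 (\<lambda>t. prod (f t) (g t))"
  by (simp add: smooth01_iff_times_differentiable01 times_differentiable01_bilinear)

lemmas smooth01_scaleR = smooth01_bilinear[OF bounded_bilinear_scaleR]
lemmas smooth01_mult = smooth01_bilinear[OF bounded_bilinear_mult]
lemmas smooth01_inner = smooth01_bilinear[OF bounded_bilinear_inner]

lemma smooth01_diff: "smooth01 f \<Longrightarrow> smooth01 g \<Longrightarrow> smooth01 (\<lambda>t. f t - g t)"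
  by (simp add: smooth01_iff_times_differentiable01 times_differentiable01_diff)

lemma smooth01_const: "smooth01 (\<lambda>t. c)"
  by (simp add: smooth01_iff_times_differentiable01 times_differentiable01_const)

lemma smooth01_ident: "smooth01 (\<lambda>t. t)"
  by (simp add: smooth01_iff_times_differentiable01 times_differentiable01_ident)

lemma smooth01_inverse_norm:
  fixes u :: "real \<Rightarrow> 'a::real_inner"
  shows "smooth01 u \<Longrightarrow> (\<And>t. t \<in> I01 \<Longrightarrow> u t \<noteq> 0) \<Longrightarrow> smooth01 (\<lambda>t. inverse (norm (u t)))"
  by (auto simp: smooth01_iff_times_differentiable01
      intro!: times_differentiable01_inverse times_differentiable01_norm)

lemma continuous_on_I01_integrable:
  fixes f :: "real \<Rightarrow> 'a::banach"
  shows "continuous_on I01 f \<Longrightarrow> f integrable_on I01"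
  unfolding I01_def by (rule integrable_continuous_interval)

lemma nablat_bilinear:
  fixes prod :: "'a::real_normed_vector \<Rightarrow> 'b::real_normed_vector \<Rightarrow> 'c::real_normed_vector"
  assumes "bounded_bilinear prod" "differentiable01 f" "differentiable01 g" "t \<in> I01"
  shows "nablat (\<lambda>t. prod (f t) (g t)) t = prod (f t) (nablat g t) + prod (nablat f t) (g t)"
  using assms
  by (intro nablat_eqI bounded_bilinear.has_vector_derivative) (auto simp: differentiable01_def)

lemmas nablat_scaleR = nablat_bilinear[OF bounded_bilinear_scaleR]
lemmas nablat_mult = nablat_bilinear[OF bounded_bilinear_mult]
lemmas nablat_inner = nablat_bilinear[OF bounded_bilinear_inner]

lemma nablat_add:
  "differentiable01 f \<Longrightarrow> differentiable01 g \<Longrightarrow> t \<in> I01 \<Longrightarrow>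
    nablat (\<lambda>t. f t + g t) t = nablat f t + nablat g t"
  by (intro nablat_eqI) (auto simp: differentiable01_def intro!: derivative_eq_intros)

lemma nablat_diff:
  "differentiable01 f \<Longrightarrow> differentiable01 g \<Longrightarrow> t \<in> I01 \<Longrightarrow>
    nablat (\<lambda>t. f t - g t) t = nablat f t - nablat g t"
  by (intro nablat_eqI) (auto simp: differentiable01_def intro!: derivative_eq_intros)

lemma nablat_const: "t \<in> I01 \<Longrightarrow> nablat (\<lambda>t. c) t = 0"
  by (intro nablat_eqI) (auto intro!: derivative_eq_intros)

lemma nablat_inverse:
  "differentiable01 f \<Longrightarrow> t \<in> I01 \<Longrightarrow> f t \<noteq> (0::real) \<Longrightarrow>
    nablat (\<lambda>t. inverse (f t)) t = - (nablat f t * (inverse (f t) * inverse (f t)))"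
  by (intro nablat_eqI)
    (auto simp: differentiable01_def has_real_derivative_iff_has_vector_derivative[symmetric]
      intro!: derivative_eq_intros)

lemma nablat_norm:
  fixes u :: "real \<Rightarrow> 'a::real_inner"
  shows "differentiable01 u \<Longrightarrow> t \<in> I01 \<Longrightarrow> u t \<noteq> 0 \<Longrightarrow>
    nablat (\<lambda>t. norm (u t)) t = (u t \<bullet> nablat u t) * inverse (norm (u t))"
  by (intro nablat_eqI has_vector_derivative_norm) (auto simp: differentiable01_def)

lemma nablat_nablat_diff:
  assumes "times_differentiable01 2 f" "times_differentiable01 2 g" "t \<in> I01"
  shows "nablat (nablat (\<lambda>s. f s - g s)) t = nablat (nablat f) t - nablat (nablat g) t"
proof -
  have "nablat (nablat (\<lambda>s. f s - g s)) t = nablat (\<lambda>s. nablat f s - nablat g s) t"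
    using assms by (intro nablat_cong nablat_diff) (auto simp: numeral_2_eq_2)
  also have "\<dots> = nablat (nablat f) t - nablat (nablat g) t"
    using assms by (intro nablat_diff) (auto simp: numeral_2_eq_2)
  finally show ?thesis .
qed

lemma nablat_nablat_scaleR:
  assumes m: "times_differentiable01 2 m" and f: "times_differentiable01 2 f" and t: "t \<in> I01"
  shows "nablat (nablat (\<lambda>s. m s *\<^sub>R f s)) t =
    m t *\<^sub>R nablat (nablat f) t + 2 *\<^sub>R (nablat m t *\<^sub>R nablat f t) + nablat (nablat m) t *\<^sub>R f t"
proof -
  have d: "differentiable01 m" "differentiable01 (nablat m)"
    "differentiable01 f" "differentiable01 (nablat f)"
    using m f by (auto simp: numeral_2_eq_2)
  have "times_differentiable01 (Suc 0) (\<lambda>s. m s *\<^sub>R nablat f s)"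
    "times_differentiable01 (Suc 0) (\<lambda>s. nablat m s *\<^sub>R f s)"
    using m f by (intro times_differentiable01_scaleR; auto simp: numeral_2_eq_2)+
  then have d': "differentiable01 (\<lambda>s. m s *\<^sub>R nablat f s)"
    "differentiable01 (\<lambda>s. nablat m s *\<^sub>R f s)"
    by auto
  have "nablat (nablat (\<lambda>s. m s *\<^sub>R f s)) t =
      nablat (\<lambda>s. m s *\<^sub>R nablat f s + nablat m s *\<^sub>R f s) t"
    using t d by (intro nablat_cong nablat_scaleR) auto
  also have "\<dots> = m t *\<^sub>R nablat (nablat f) t + 2 *\<^sub>R (nablat m t *\<^sub>R nablat f t)
      + nablat (nablat m) t *\<^sub>R f t"
    using t d d' by (simp add: nablat_add nablat_scaleR scaleR_2 add.assoc del: scaleR_scaleR)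
  finally show ?thesis .
qed

section \<open>The unit tangent\<close>

lemma unitv_eq: "unitv u = (\<lambda>t. inverse (norm (u t)) *\<^sub>R u t)"
  by (auto simp: unitv_def divide_inverse)

lemma smooth01_unitv: "immersion u \<Longrightarrow> smooth01 (unitv u)"
  unfolding immersion_def unitv_eq by (auto intro!: smooth01_scaleR smooth01_inverse_norm)

lemma unitv_inner_self: "immersion u \<Longrightarrow> t \<in> I01 \<Longrightarrow> unitv u t \<bullet> unitv u t = 1"
  by (simp add: immersion_def unitv_def power2_norm_eq_inner[symmetric] power_divide)

lemma unitv_inner_nablat_unitv:
  assumes "immersion u" and "t \<in> I01"
  shows "unitv u t \<bullet> nablat (unitv u) t = 0"
proof -
  have d: "differentiable01 (unitv u)"
    using assms(1) by (intro smooth01_differentiable01 smooth01_unitv)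
  have "nablat (\<lambda>t. unitv u t \<bullet> unitv u t) t = nablat (\<lambda>t. 1) t"
    using assms unitv_inner_self by (intro nablat_cong) auto
  then show ?thesis
    using nablat_inner[OF d d assms(2)] nablat_const[OF assms(2), of "1::real"]
    by (simp add: inner_commute)
qed

lemma unitv_inner_nablat_nablat_unitv:
  assumes "immersion u" and "t \<in> I01"
  shows "unitv u t \<bullet> nablat (nablat (unitv u)) t = - (nablat (unitv u) t \<bullet> nablat (unitv u) t)"
proof -
  have d: "differentiable01 (unitv u)" "differentiable01 (nablat (unitv u))"
    using assms(1) by (auto intro!: smooth01_differentiable01 smooth01_nablat smooth01_unitv)
  have "nablat (\<lambda>t. unitv u t \<bullet> nablat (unitv u) t) t = nablat (\<lambda>t. 0) t"
    using assms unitv_inner_nablat_unitv by (intro nablat_cong) auto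
  then show ?thesis
    using nablat_inner[OF d assms(2)] nablat_const[OF assms(2), of "0::real"]
    by (simp add: inner_commute)
qed

section \<open>The elastic metric as an integral\<close>

definition elastic_quad :: "real \<Rightarrow> real \<Rightarrow> (real \<Rightarrow> 'a::euclidean_space) \<Rightarrow> real \<Rightarrow> 'a \<Rightarrow> real" where
  "elastic_quad a b u t x = a\<^sup>2 * (norm (npart u t x))\<^sup>2 + b\<^sup>2 * (norm (tpart u t x))\<^sup>2"

definition elastic_inner :: "real \<Rightarrow> real \<Rightarrow> (real \<Rightarrow> 'a::euclidean_space) \<Rightarrow> real \<Rightarrow> 'a \<Rightarrow> 'a \<Rightarrow> real" where
  "elastic_inner a b u t x y = a\<^sup>2 * (npart u t x \<bullet> npart u t y) + b\<^sup>2 * (tpart u t x \<bullet> tpart u t y)"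

lemma Gq_eq_integral_elastic_quad:
  "Gq a b u w = (norm (w 0))\<^sup>2 + integral I01 (\<lambda>t. elastic_quad a b u t (nablal u w t) * norm (u t))"
  by (simp add: Gq_def elastic_quad_def)

lemma tpart_add: "tpart u t (x + y) = tpart u t x + tpart u t y"
  by (simp add: tpart_def inner_add_left scaleR_add_left)

lemma tpart_diff: "tpart u t (x - y) = tpart u t x - tpart u t y"
  by (simp add: tpart_def inner_diff_left scaleR_diff_left)

lemma tpart_scaleR: "tpart u t (c *\<^sub>R x) = c *\<^sub>R tpart u t x"
  by (simp add: tpart_def)

lemma npart_add: "npart u t (x + y) = npart u t x + npart u t y"
  by (simp add: npart_def tpart_add)

lemma npart_diff: "npart u t (x - y) = npart u t x - npart u t y"
  by (simp add: npart_def tpart_diff)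

lemma npart_scaleR: "npart u t (c *\<^sub>R x) = c *\<^sub>R npart u t x"
  by (simp add: npart_def tpart_scaleR scaleR_diff_right)

lemma norm_add_square_minus_norm_diff_square:
  fixes x y :: "'a::real_inner"
  shows "(norm (x + y))\<^sup>2 - (norm (x - y))\<^sup>2 = 4 * (x \<bullet> y)"
  using dot_norm[of x y] dot_norm_neg[of x y] by simp

lemma elastic_quad_scaleR: "elastic_quad a b u t (c *\<^sub>R x) = c\<^sup>2 * elastic_quad a b u t x"
  by (simp add: elastic_quad_def npart_scaleR tpart_scaleR power_mult_distrib algebra_simps)

lemma elastic_quad_polarization:
  "elastic_quad a b u t (x + y) - elastic_quad a b u t (x - y) = 4 * elastic_inner a b u t x y"
  by (simp add: elastic_quad_def elastic_inner_def npart_add npart_diff tpart_add tpart_diff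
      norm_add_square_minus_norm_diff_square[unfolded diff_eq_eq] algebra_simps)

lemma Gbil_eq_integral:
  fixes u h k :: "real \<Rightarrow> 'a::euclidean_space"
  assumes u: "immersion u"
    and h: "times_differentiable01 2 h" and k: "times_differentiable01 2 k"
  shows "Gbil a b u h k = h 0 \<bullet> k 0
    + integral I01 (\<lambda>t. elastic_inner a b u t (nablat h t) (nablat k t) / norm (u t))"
proof -
  have dh: "differentiable01 h" and dk: "differentiable01 k"
    using h k by (simp_all add: numeral_2_eq_2)
  have ch: "continuous_on I01 (nablat h)" and ck: "continuous_on I01 (nablat k)"
    using h k by (auto simp: numeral_2_eq_2 intro: differentiable01_continuous_on)
  have cu: "continuous_on I01 u" and nz: "\<And>t. t \<in> I01 \<Longrightarrow> u t \<noteq> 0"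
    using u by (auto simp: immersion_def smooth01_continuous_on)
  define Q where "Q x t = elastic_quad a b u t ((1 / norm (u t)) *\<^sub>R x) * norm (u t)" for x t
  have Q_plus: "elastic_quad a b u t (nablal u (\<lambda>s. h s + k s) t) * norm (u t)
      = Q (nablat h t + nablat k t) t" if "t \<in> I01" for t
    using that by (simp add: Q_def nablal_def nablat_add[OF dh dk])
  have Q_minus: "elastic_quad a b u t (nablal u (\<lambda>s. h s - k s) t) * norm (u t)
      = Q (nablat h t - nablat k t) t" if "t \<in> I01" for t
    using that by (simp add: Q_def nablal_def nablat_diff[OF dh dk])
  have Q_integrable: "(\<lambda>t. Q (x t) t) integrable_on I01" if "continuous_on I01 x" for x
    using that cu nz unfolding Q_def elastic_quad_def npart_def tpart_def unitv_def
    by (intro continuous_on_I01_integrable continuous_intros) auto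
  have Q_polarization: "Q (x + y) t - Q (x - y) t = 4 * (elastic_inner a b u t x y / norm (u t))"
    if "t \<in> I01" for x y t
  proof -
    have "Q (x + y) t - Q (x - y) t
        = (elastic_quad a b u t (x + y) - elastic_quad a b u t (x - y)) / norm (u t)"
      unfolding Q_def elastic_quad_scaleR using nz[OF that] by (simp add: power2_eq_square field_simps)
    then show ?thesis by (simp add: elastic_quad_polarization)
  qed
  have "integral I01 (\<lambda>t. elastic_quad a b u t (nablal u (\<lambda>s. h s + k s) t) * norm (u t))
      - integral I01 (\<lambda>t. elastic_quad a b u t (nablal u (\<lambda>s. h s - k s) t) * norm (u t))
      = integral I01 (\<lambda>t. Q (nablat h t + nablat k t) t) - integral I01 (\<lambda>t. Q (nablat h t - nablat k t) t)"
    using Q_plus Q_minus by (simp cong: integral_cong)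
  also have "\<dots> = integral I01 (\<lambda>t. Q (nablat h t + nablat k t) t - Q (nablat h t - nablat k t) t)"
    using ch ck by (intro integral_diff[symmetric] Q_integrable continuous_intros)
  also have "\<dots> = 4 * integral I01 (\<lambda>t. elastic_inner a b u t (nablat h t) (nablat k t) / norm (u t))"
    using Q_polarization by (simp cong: integral_cong del: times_divide_eq_right)
  finally show ?thesis
    by (simp add: Gbil_def Gq_eq_integral_elastic_quad
        norm_add_square_minus_norm_diff_square[unfolded diff_eq_eq])
qed

section \<open>Pairing with vertical vectors\<close>

definition vertical_density ::
  "real \<Rightarrow> real \<Rightarrow> (real \<Rightarrow> 'a::euclidean_space) \<Rightarrow> (real \<Rightarrow> 'a) \<Rightarrow> real \<Rightarrow> real" where
  "vertical_density a b u h t = a\<^sup>2 * (nablat h t \<bullet> nablat (unitv u) t) / norm (u t)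
     - b\<^sup>2 * nablat (\<lambda>s. nablal u h s \<bullet> unitv u s) t"

lemma nablal_inner_unitv_eq:
  "(\<lambda>s. nablal u h s \<bullet> unitv u s) = (\<lambda>s. (nablat h s \<bullet> unitv u s) * inverse (norm (u s)))"
  by (simp add: nablal_def divide_inverse mult.commute)

lemma smooth01_nablal_inner_unitv:
  "immersion u \<Longrightarrow> smooth01 h \<Longrightarrow> smooth01 (\<lambda>s. nablal u h s \<bullet> unitv u s)"
  unfolding nablal_inner_unitv_eq
  by (intro smooth01_mult smooth01_inner smooth01_nablat smooth01_unitv smooth01_inverse_norm)
    (auto simp: immersion_def)

lemma smooth01_vertical_density:
  assumes "immersion u" and "smooth01 h"
  shows "smooth01 (vertical_density a b u h)"
proof -
  have eq: "vertical_density a b u h = (\<lambda>t. a\<^sup>2 * (nablat h t \<bullet> nablat (unitv u) t) * inverse (norm (u t))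
      - b\<^sup>2 * nablat (\<lambda>s. nablal u h s \<bullet> unitv u s) t)"
    by (auto simp: vertical_density_def divide_inverse)
  show ?thesis
    unfolding eq using assms
    by (intro smooth01_diff smooth01_mult smooth01_inner smooth01_const smooth01_nablat
        smooth01_unitv smooth01_inverse_norm smooth01_nablal_inner_unitv)
      (auto simp: immersion_def)
qed

lemma elastic_inner_vertical:
  assumes u: "immersion u" and h: "smooth01 h" and m: "smooth01 m" and t: "t \<in> I01"
  shows "elastic_inner a b u t (nablat h t) (nablat (\<lambda>s. m s *\<^sub>R unitv u s) t) / norm (u t)
    = m t * vertical_density a b u h t + b\<^sup>2 * nablat (\<lambda>s. m s * (nablal u h s \<bullet> unitv u s)) t"
proof -
  have dm: "differentiable01 m" and dv: "differentiable01 (unitv u)"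
    and d\<phi>: "differentiable01 (\<lambda>s. nablal u h s \<bullet> unitv u s)"
    using u h m by (auto intro!: smooth01_differentiable01 smooth01_unitv smooth01_nablal_inner_unitv)
  have nz: "norm (u t) \<noteq> 0" using u t by (simp add: immersion_def)
  have vv: "unitv u t \<bullet> unitv u t = 1" using unitv_inner_self[OF u t] .
  have vv': "unitv u t \<bullet> nablat (unitv u) t = 0" "nablat (unitv u) t \<bullet> unitv u t = 0"
    using unitv_inner_nablat_unitv[OF u t] by (simp_all add: inner_commute)
  show ?thesis
    using nz
    unfolding elastic_inner_def vertical_density_def npart_def tpart_def
      nablat_scaleR[OF dm dv t] nablat_mult[OF dm d\<phi> t]
    by (simp add: nablal_def inner_diff_left inner_diff_right inner_add_left inner_add_right vv vv'
        field_simps inner_commute)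
qed

lemma Gbil_vertical_eq_integral:
  fixes u h :: "real \<Rightarrow> 'a::euclidean_space"
  assumes u: "immersion u" and h: "smooth01 h" and m: "m \<in> Cfun"
  shows "Gbil a b u h (\<lambda>t. m t *\<^sub>R unitv u t) = integral I01 (\<lambda>t. m t * vertical_density a b u h t)"
proof -
  have sm: "smooth01 m" and m01: "m 0 = 0" "m 1 = 0"
    using m by (auto simp: Cfun_def)
  define g where "g = (\<lambda>s. m s * (nablal u h s \<bullet> unitv u s))"
  have "smooth01 g"
    unfolding g_def using u h sm by (intro smooth01_mult smooth01_nablal_inner_unitv)
  then have "(nablat g has_integral g 1 - g 0) {0..1}"
    by (intro fundamental_theorem_of_calculus)
      (auto simp: I01_def differentiable01_def dest: smooth01_differentiable01)
  then have "(nablat g has_integral 0) I01"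
    using m01 by (simp add: g_def I01_def)
  then have g_integral: "((\<lambda>t. b\<^sup>2 * nablat g t) has_integral 0) I01"
    using has_integral_mult_right[of "nablat g" 0 I01 "b\<^sup>2"] by simp
  have F_integrable: "(\<lambda>t. m t * vertical_density a b u h t) integrable_on I01"
    using u h sm by (intro continuous_on_I01_integrable smooth01_continuous_on smooth01_mult
        smooth01_vertical_density)
  have "Gbil a b u h (\<lambda>t. m t *\<^sub>R unitv u t) = integral I01 (\<lambda>t.
      elastic_inner a b u t (nablat h t) (nablat (\<lambda>s. m s *\<^sub>R unitv u s) t) / norm (u t))"
    using Gbil_eq_integral[OF u smooth01_times_differentiable01[OF h]
        smooth01_times_differentiable01[OF smooth01_scaleR[OF sm smooth01_unitv[OF u]]]]
    by (simp add: m01)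
  also have "\<dots> = integral I01 (\<lambda>t. m t * vertical_density a b u h t + b\<^sup>2 * nablat g t)"
    using elastic_inner_vertical[OF u h sm] by (intro integral_cong) (simp add: g_def)
  also have "\<dots> = integral I01 (\<lambda>t. m t * vertical_density a b u h t)"
    using integral_add[OF F_integrable has_integral_integrable[OF g_integral]]
      integral_unique[OF g_integral]
    by simp
  finally show ?thesis .
qed

lemma smooth01_eq_0_if_orthogonal_to_Cfun:
  assumes F: "smooth01 F" and orth: "\<forall>m\<in>Cfun. integral I01 (\<lambda>s. m s * F s) = 0"
    and t: "t \<in> I01"
  shows "F t = 0"
proof -
  define m where "m s = s * (1 - s) * F s" for s
  have "m \<in> Cfun"
    unfolding Cfun_def m_def using F
    by (auto intro!: smooth01_mult smooth01_diff smooth01_ident smooth01_const)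
  then have "integral I01 (\<lambda>s. m s * F s) = 0"
    using orth by blast
  moreover have cont: "continuous_on I01 (\<lambda>s. m s * F s)"
    using \<open>m \<in> Cfun\<close> F by (auto simp: Cfun_def intro!: smooth01_continuous_on smooth01_mult)
  ultimately have "((\<lambda>s. m s * F s) has_integral 0) (cbox 0 1)"
    using integrable_integral[OF continuous_on_I01_integrable[OF cont]] by (simp add: I01_def)
  moreover have "0 \<le> m s * F s" if "s \<in> box 0 1" for s
    using that by (auto simp: m_def mult.assoc intro!: mult_nonneg_nonneg)
  ultimately have "m s * F s = 0" if "s \<in> {0<..<1}" for s
    using cont that by (intro has_integral_0_cbox_imp_0[of 0 1 "\<lambda>s. m s * F s"]) (auto simp: I01_def)
  then have "{0<..<1} \<subseteq> {s \<in> I01. F s = 0}"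
    by (auto simp: I01_def m_def)
  moreover have "closed {s \<in> I01. F s = 0}"
    using F by (intro continuous_closed_preimage_constant smooth01_continuous_on)
      (auto simp: I01_def)
  ultimately have "closure {0<..<1} \<subseteq> {s \<in> I01. F s = 0}"
    by (rule closure_minimal)
  then show ?thesis
    using t by (auto simp: I01_def)
qed

lemma horizontal_iff_vertical_density_eq_0:
  assumes "immersion u" and "smooth01 h"
  shows "horizontal a b u h \<longleftrightarrow> (\<forall>t\<in>I01. vertical_density a b u h t = 0)"
proof -
  have "horizontal a b u h \<longleftrightarrow> (\<forall>m\<in>Cfun. integral I01 (\<lambda>t. m t * vertical_density a b u h t) = 0)"
    using assms by (simp add: horizontal_def Gbil_vertical_eq_integral)
  also have "\<dots> \<longleftrightarrow> (\<forall>t\<in>I01. vertical_density a b u h t = 0)"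
    using smooth01_eq_0_if_orthogonal_to_Cfun[OF smooth01_vertical_density[OF assms]]
    by (auto cong: integral_cong)
  finally show ?thesis .
qed

section \<open>The horizontality equation\<close>

definition horizontality_residual ::
  "real \<Rightarrow> real \<Rightarrow> (real \<Rightarrow> 'a::euclidean_space) \<Rightarrow> (real \<Rightarrow> 'a) \<Rightarrow> real \<Rightarrow> real" where
  "horizontality_residual a b u h t = ((a / b)\<^sup>2 - 1) * (nablat h t \<bullet> nablat (unitv u) t)
     - (nablat (nablat h) t \<bullet> unitv u t)
     + (1 / norm (u t)) * (nablat u t \<bullet> unitv u t) * (nablat h t \<bullet> unitv u t)"

lemma vertical_density_eq_residual:
  assumes u: "immersion u" and h: "times_differentiable01 2 h" and b: "b \<noteq> 0" and t: "t \<in> I01"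
  shows "vertical_density a b u h t = b\<^sup>2 / norm (u t) * horizontality_residual a b u h t"
proof -
  have su: "smooth01 u" and nz: "u t \<noteq> 0" and nz': "\<And>s. s \<in> I01 \<Longrightarrow> u s \<noteq> 0"
    using u t by (auto simp: immersion_def)
  have dh': "differentiable01 (nablat h)"
    using h by (simp add: numeral_2_eq_2)
  have dv: "differentiable01 (unitv u)" and du: "differentiable01 u"
    using u su by (auto intro: smooth01_differentiable01 smooth01_unitv)
  have "times_differentiable01 (Suc 0) (\<lambda>s. nablat h s \<bullet> unitv u s)"
    using h smooth01_unitv[OF u]
    by (intro times_differentiable01_inner) (auto simp: numeral_2_eq_2 intro: smooth01_differentiable01)
  then have dhv: "differentiable01 (\<lambda>s. nablat h s \<bullet> unitv u s)"
    by simp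
  have "times_differentiable01 (Suc 0) (\<lambda>s. norm (u s))"
    using su nz' by (intro times_differentiable01_norm smooth01_times_differentiable01)
  then have dn: "differentiable01 (\<lambda>s. norm (u s))"
    by simp
  have dinv: "differentiable01 (\<lambda>s. inverse (norm (u s)))"
    using su nz' by (intro smooth01_differentiable01 smooth01_inverse_norm)
  have n\<phi>: "nablat (\<lambda>s. nablal u h s \<bullet> unitv u s) t
      = (nablat h t \<bullet> unitv u t) * nablat (\<lambda>s. inverse (norm (u s))) t
        + nablat (\<lambda>s. nablat h s \<bullet> unitv u s) t * inverse (norm (u t))"
    unfolding nablal_inner_unitv_eq using nablat_mult[OF dhv dinv t] .
  have nhv: "nablat (\<lambda>s. nablat h s \<bullet> unitv u s) t
      = nablat h t \<bullet> nablat (unitv u) t + nablat (nablat h) t \<bullet> unitv u t"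
    using nablat_inner[OF dh' dv t] .
  have ninv: "nablat (\<lambda>s. inverse (norm (u s))) t
      = - ((u t \<bullet> nablat u t) * inverse (norm (u t)) * (inverse (norm (u t)) * inverse (norm (u t))))"
    using nablat_inverse[OF dn t] nablat_norm[OF du t nz] nz by simp
  have u'v: "nablat u t \<bullet> unitv u t = inverse (norm (u t)) * (u t \<bullet> nablat u t)"
    by (simp add: unitv_def inner_commute divide_inverse)
  show ?thesis
    unfolding vertical_density_def horizontality_residual_def n\<phi> nhv ninv u'v
    using nz b by (simp add: field_simps power2_eq_square)
qed

lemma horizontal_iff_residual_eq_0:
  assumes "immersion u" and "b \<noteq> 0" and "smooth01 h"
  shows "horizontal a b u h \<longleftrightarrow> (\<forall>t\<in>I01. horizontality_residual a b u h t = 0)"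
  using assms
  by (simp add: horizontal_iff_vertical_density_eq_0 vertical_density_eq_residual
      smooth01_times_differentiable01 immersion_def)

lemma horizontality_residual_diff_vertical:
  assumes u: "immersion u" and w: "times_differentiable01 2 w" and m: "times_differentiable01 2 m"
    and t: "t \<in> I01"
  shows "horizontality_residual a b u (\<lambda>s. w s - m s *\<^sub>R unitv u s) t
    = horizontality_residual a b u w t - ((a / b)\<^sup>2 * (norm (nablat (unitv u) t))\<^sup>2 * m t
        - nablat (nablat m) t + (1 / norm (u t)) * (nablat u t \<bullet> unitv u t) * nablat m t)"
proof -
  have v: "times_differentiable01 2 (unitv u)"
    using u by (intro smooth01_times_differentiable01 smooth01_unitv)
  have mv: "times_differentiable01 2 (\<lambda>s. m s *\<^sub>R unitv u s)"
    using m v by (rule times_differentiable01_scaleR)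
  have d: "differentiable01 w" "differentiable01 m" "differentiable01 (unitv u)"
    "differentiable01 (\<lambda>s. m s *\<^sub>R unitv u s)"
    using w m v mv by (simp_all add: numeral_2_eq_2)
  have vv: "unitv u t \<bullet> unitv u t = 1" using unitv_inner_self[OF u t] .
  have vv': "unitv u t \<bullet> nablat (unitv u) t = 0" "nablat (unitv u) t \<bullet> unitv u t = 0"
    using unitv_inner_nablat_unitv[OF u t] by (simp_all add: inner_commute)
  have vv'': "nablat (nablat (unitv u)) t \<bullet> unitv u t = - (nablat (unitv u) t \<bullet> nablat (unitv u) t)"
    using unitv_inner_nablat_nablat_unitv[OF u t] by (simp add: inner_commute)
  show ?thesis
    unfolding horizontality_residual_def nablat_diff[OF d(1) d(4) t] nablat_scaleR[OF d(2) d(3) t]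
      nablat_nablat_diff[OF w mv t] nablat_nablat_scaleR[OF m v t] power2_norm_eq_inner
    by (simp add: inner_diff_left inner_diff_right inner_add_left inner_add_right vv vv' vv''
        algebra_simps diff_divide_distrib)
qed

lemma horizontal_diff_vertical_iff:
  assumes u: "immersion u" and b: "b \<noteq> 0" and w: "smooth01 w" and m: "m \<in> Cfun"
  shows "horizontal a b u (\<lambda>t. w t - m t *\<^sub>R unitv u t) \<longleftrightarrow>
    (\<forall>t\<in>I01. nablat (nablat m) t
        - (((1 / norm (u t)) *\<^sub>R nablat u t) \<bullet> unitv u t) * nablat m t
        - (a / b)\<^sup>2 * (norm (nablat (unitv u) t))\<^sup>2 * m t
      = (nablat (nablat w) t \<bullet> unitv u t)
        - ((a / b)\<^sup>2 - 1) * (nablat w t \<bullet> nablat (unitv u) t)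
        - (((1 / norm (u t)) *\<^sub>R nablat u t) \<bullet> unitv u t) * (nablat w t \<bullet> unitv u t))"
    (is "_ \<longleftrightarrow> ?rhs")
proof -
  have sm: "smooth01 m"
    using m by (simp add: Cfun_def)
  have sh: "smooth01 (\<lambda>t. w t - m t *\<^sub>R unitv u t)"
    using u w sm by (intro smooth01_diff smooth01_scaleR smooth01_unitv)
  have "horizontal a b u (\<lambda>t. w t - m t *\<^sub>R unitv u t) \<longleftrightarrow>
      (\<forall>t\<in>I01. horizontality_residual a b u (\<lambda>s. w s - m s *\<^sub>R unitv u s) t = 0)"
    using u b sh by (rule horizontal_iff_residual_eq_0)
  also have "\<dots> \<longleftrightarrow> (\<forall>t\<in>I01. horizontality_residual a b u w t
      - ((a / b)\<^sup>2 * (norm (nablat (unitv u) t))\<^sup>2 * m t - nablat (nablat m) t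
         + (1 / norm (u t)) * (nablat u t \<bullet> unitv u t) * nablat m t) = 0)"
    using u w sm by (simp add: horizontality_residual_diff_vertical smooth01_times_differentiable01)
  also have "\<dots> \<longleftrightarrow> ?rhs"
    by (intro ball_cong refl) (auto simp: horizontality_residual_def algebra_simps)
  finally show ?thesis .
qed

theorem mainTheorem1:
  fixes u :: "real \<Rightarrow> 'a::euclidean_space" and a b :: real
  assumes "immersion u" and "b \<noteq> 0"
  shows
   "(\<forall>h. smooth01 h \<longrightarrow>
      (horizontal a b u h \<longleftrightarrow>
        (\<forall>t\<in>I01. ((a / b)\<^sup>2 - 1) * (nablat h t \<bullet> nablat (unitv u) t)
                  - (nablat (nablat h) t \<bullet> unitv u t)
                  + (1 / norm (u t)) * (nablat u t \<bullet> unitv u t) * (nablat h t \<bullet> unitv u t) = 0)))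
    \<and> (\<forall>h. smooth01 h \<longrightarrow>
      (horizontal 1 (1/2) u h \<longleftrightarrow>
        (\<forall>t\<in>I01. 3 * (nablat h t \<bullet> nablat (unitv u) t)
                  - (nablat (nablat h) t \<bullet> unitv u t)
                  + (1 / norm (u t)) * (nablat u t \<bullet> unitv u t) * (nablat h t \<bullet> unitv u t) = 0)))
    \<and> (\<forall>w. smooth01 w \<longrightarrow> (\<forall>m\<in>Cfun.
      (horizontal 1 (1/2) u (\<lambda>t. w t - m t *\<^sub>R unitv u t) \<longleftrightarrow>
        (\<forall>t\<in>I01. nablat (nablat m) t
                  - (((1 / norm (u t)) *\<^sub>R nablat u t) \<bullet> unitv u t) * nablat m t
                  - 4 * (norm (nablat (unitv u) t))\<^sup>2 * m t
                = (nablat (nablat w) t \<bullet> unitv u t)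
                  - 3 * (nablat w t \<bullet> nablat (unitv u) t)
                  - (((1 / norm (u t)) *\<^sub>R nablat u t) \<bullet> unitv u t) * (nablat w t \<bullet> unitv u t)))))"
  using horizontal_iff_residual_eq_0[OF assms(1,2)]
    horizontal_iff_residual_eq_0[OF assms(1), of "1/2" _ 1]
    horizontal_diff_vertical_iff[OF assms(1), of "1/2" _ _ 1]
  by (simp add: horizontality_residual_def)

end
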